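(* Let $\mathsf{K}>0$ and $\omega_{\Delta^n}=\sqrt{-1}\sum_{\alpha=1}^n\frac{2}{\mathsf{K}(1-|z^\alpha|^2)^2}dz^\alpha\wedge dz^{\bar\alpha}$ on $\Delta^n$. Let $u\colon\Delta\to\Delta^n$ be a holomorphic map which is a totally geodesic isometric embedding with respect to some Poincaré metric $\sqrt{-1}\frac{2}{\mathsf{K}'(1-|\zeta|^2)^2}d\zeta\wedge d\bar\zeta$ ($\mathsf{K}'>0$) on $\Delta$ and $\omega_{\Delta^n}$, and put $S=u(\Delta)$. Suppose $\varphi$ is a potential of $\omega_{\Delta^n}$ on an open set $V\subset\Delta^n$ meeting $S$, with $|\partial\varphi|_{\omega_{\Delta^n}}^2\le\mathsf{C}$ on $V$ for some $\mathsf{C}>0$, such that (1) the gradient vector field $\mathcal{V}=\mathrm{grad}(\varphi)$ is tangent to $S$, i.e. $\mathcal{V}(p)\in T^{(1,0)}_pS$ for each $p\in S\cap V$, and (2) $|\partial\varphi|_{\omega_{\Delta^n}}^2\equiv\mathsf{C}$ on $S\cap V$. Then $u$ has full rank $n$, i.e. every component $u^\alpha$ of $u$ is nonconstant.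
   Context: Conventions: $dd^c=\sqrt{-1}\partial\bar\partial$; a potential satisfies $dd^c\varphi=\omega_{\Delta^n}$; the gradient vector field is the $(1,0)$-vector field $\mathcal{V}$ with $\partial\varphi(v)=\langle v,\overline{\mathcal{V}}\rangle_\omega$ for all $(1,0)$-vectors $v$, and $|\partial\varphi|_\omega=|\mathcal{V}|_\omega$. For such a totally geodesic isometric holomorphic disc each component $u^\alpha$ is either constant or an automorphism of $\Delta$; the rank of $u$ is the number of nonconstant components. *)

theory Defs
  imports "HOL-Analysis.Analysis"
begin

text \<open>Points of \<open>\<Delta>^n\<close> are vectors \<open>complex^'n\<close>; the coordinate index type
  \<open>'n\<close> is finite with \<open>CARD('n) = n\<close>.\<close>

definition polydisc :: "(complex^'n) set" where
  "polydisc = {z. \<forall>\<alpha>. cmod (z $ \<alpha>) < 1}"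

text \<open>Coefficient of the metric: \<open>\<omega> = \<surd>-1 \<Sum> g_\<alpha> dz^\<alpha> \<and> dz^{\<bar>\<alpha>}\<close>.\<close>
definition pcoef :: "real \<Rightarrow> complex \<Rightarrow> real" where
  "pcoef K w = 2 / (K * (1 - (cmod w)\<^sup>2)\<^sup>2)"

text \<open>Wirtinger derivatives in the coordinate \<open>z^\<alpha>\<close> (via real directional derivatives
  in the directions \<open>\<partial>/\<partial>x^\<alpha>\<close> and \<open>\<partial>/\<partial>y^\<alpha>\<close>).\<close>
definition wirt_z :: "(complex^'n \<Rightarrow> complex) \<Rightarrow> 'n \<Rightarrow> complex^'n \<Rightarrow> complex" where
  "wirt_z F \<alpha> p = (frechet_derivative F (at p) (axis \<alpha> 1)
                    - \<i> * frechet_derivative F (at p) (axis \<alpha> \<i>)) / 2"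

definition wirt_zbar :: "(complex^'n \<Rightarrow> complex) \<Rightarrow> 'n \<Rightarrow> complex^'n \<Rightarrow> complex" where
  "wirt_zbar F \<alpha> p = (frechet_derivative F (at p) (axis \<alpha> 1)
                    + \<i> * frechet_derivative F (at p) (axis \<alpha> \<i>)) / 2"

fun iter_dd :: "(complex^'n) list \<Rightarrow> (complex^'n \<Rightarrow> complex) \<Rightarrow> complex^'n \<Rightarrow> complex" where
  "iter_dd [] F = F"
| "iter_dd (v # vs) F = (\<lambda>p. frechet_derivative (iter_dd vs F) (at p) v)"

definition smooth_on :: "(complex^'n) set \<Rightarrow> (complex^'n \<Rightarrow> complex) \<Rightarrow> bool" where
  "smooth_on V F \<longleftrightarrow> (\<forall>vs. iter_dd vs F differentiable_on V)"

text \<open>\<open>\<phi>\<close> is a (smooth, real) potential of \<open>\<omega>_{\<Delta>^n}\<close> on \<open>V\<close>: \<open>\<surd>-1 \<partial>\<bar>\<partial>\<phi> = \<omega>\<close>,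
  i.e. \<open>\<partial>^2\<phi>/\<partial>z^\<alpha>\<partial>z^{\<bar>\<beta>} = \<delta>_{\<alpha>\<beta>} g_\<alpha>\<close>.\<close>
definition is_potential :: "real \<Rightarrow> (complex^'n) set \<Rightarrow> (complex^'n \<Rightarrow> real) \<Rightarrow> bool" where
  "is_potential K V \<phi> \<longleftrightarrow> smooth_on V (\<lambda>p. complex_of_real (\<phi> p)) \<and>
     (\<forall>p\<in>V. \<forall>\<alpha> \<beta>. wirt_zbar (wirt_z (\<lambda>q. complex_of_real (\<phi> q)) \<alpha>) \<beta> p
        = (if \<alpha> = \<beta> then complex_of_real (pcoef K (p $ \<alpha>)) else 0))"

text \<open>Gradient vector field: \<open>\<partial>\<phi>(v) = \<langle>v, \<bar>\<V>\<rangle>_\<omega>\<close>, so \<open>\<V>^\<alpha> = \<phi>_{\<bar>\<alpha>}/g_\<alpha>\<close>.\<close>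
definition grad_field :: "real \<Rightarrow> (complex^'n \<Rightarrow> real) \<Rightarrow> complex^'n \<Rightarrow> complex^'n" where
  "grad_field K \<phi> p = (\<chi> \<alpha>. cnj (wirt_z (\<lambda>q. complex_of_real (\<phi> q)) \<alpha> p)
                              / complex_of_real (pcoef K (p $ \<alpha>)))"

definition dphi_norm2 :: "real \<Rightarrow> (complex^'n \<Rightarrow> real) \<Rightarrow> complex^'n \<Rightarrow> real" where
  "dphi_norm2 K \<phi> p = (\<Sum>\<alpha>\<in>UNIV. (cmod (wirt_z (\<lambda>q. complex_of_real (\<phi> q)) \<alpha> p))\<^sup>2
                              / pcoef K (p $ \<alpha>))"

definition holo_isometric_embedding :: "real \<Rightarrow> real \<Rightarrow> (complex \<Rightarrow> complex^'n) \<Rightarrow> bool" where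
  "holo_isometric_embedding K K' u \<longleftrightarrow>
     (\<forall>\<alpha>. (\<lambda>\<zeta>. u \<zeta> $ \<alpha>) holomorphic_on ball 0 1) \<and>
     u ` ball 0 1 \<subseteq> polydisc \<and> inj_on u (ball 0 1) \<and>
     (\<forall>\<zeta>\<in>ball 0 1. (\<Sum>\<alpha>\<in>UNIV. pcoef K (u \<zeta> $ \<alpha>) * (cmod (deriv (\<lambda>t. u t $ \<alpha>) \<zeta>))\<^sup>2)
                      = pcoef K' \<zeta>)"

text \<open>Totally geodesic holomorphic curve: the second fundamental form vanishes, i.e.
  \<open>\<nabla>_{u'} u' = u'' + \<Gamma>(u)(u',u')\<close> is tangent (a multiple of \<open>u'\<close>), where the only
  Christoffel symbols of \<open>\<omega>_{\<Delta>^n}\<close> are \<open>\<Gamma>^\<alpha>_{\<alpha>\<alpha>} = \<partial>_\<alpha> log g_\<alpha> = 2 \<bar>z^\<alpha>/(1-|z^\<alpha>|^2)\<close>.\<close>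
definition totally_geodesic_curve :: "(complex \<Rightarrow> complex^'n) \<Rightarrow> bool" where
  "totally_geodesic_curve u \<longleftrightarrow>
     (\<forall>\<zeta>\<in>ball 0 1. \<exists>lam::complex. \<forall>\<alpha>.
        deriv (deriv (\<lambda>t. u t $ \<alpha>)) \<zeta>
        + 2 * cnj (u \<zeta> $ \<alpha>) / complex_of_real (1 - (cmod (u \<zeta> $ \<alpha>))\<^sup>2)
          * (deriv (\<lambda>t. u t $ \<alpha>) \<zeta>)\<^sup>2
        = lam * deriv (\<lambda>t. u t $ \<alpha>) \<zeta>)"

end

theory Submission
  imports Defs "HOL-Complex_Analysis.Cauchy_Integral_Formula"
begin

text \<open>If a component \<open>u\<^sup>\<alpha>\<close> were constant, then at a point \<open>p = u(\<zeta>) \<in> S \<inter> V\<close> tangency of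
  the gradient forces \<open>\<phi>\<^sub>\<alpha>(p) = 0\<close>, while by (2) and the bound \<open>|\<partial>\<phi>|\<^sup>2\<close> attains its
  maximum \<open>C\<close> at \<open>p\<close>. Average \<open>|\<partial>\<phi>|\<^sup>2 = \<Sum>\<^sub>\<beta> |\<phi>\<^sub>\<beta>|\<^sup>2/g\<^sub>\<beta>\<close> over the four points
  \<open>p + i\<^sup>k r e\<^sub>\<alpha>\<close>. For \<open>\<beta> \<noteq> \<alpha>\<close> the function \<open>\<phi>\<^sub>\<beta>\<close> is holomorphic along the
  \<open>z\<^sup>\<alpha>\<close>-line and \<open>g\<^sub>\<beta>\<close> is constant there, so the average of the \<open>\<beta>\<close>-term is at least its value
  at \<open>p\<close> up to \<open>o(r\<^sup>2)\<close>; the \<open>\<alpha>\<close>-term vanishes at \<open>p\<close> but grows like \<open>r\<^sup>2\<close> because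
  \<open>\<partial>\<phi>\<^sub>\<alpha>/\<partial>z\<^sup>\<alpha>bar = g\<^sub>\<alpha> > 0\<close>. So for small \<open>r\<close> the average exceeds \<open>C\<close>, contradicting
  maximality.\<close>

lemma norm_axis: "norm (axis i x :: 'a::real_normed_vector^'n) = norm x"
proof -
  have "(norm (axis i x $ j))\<^sup>2 = (if j = i then (norm x)\<^sup>2 else 0)" for j
    by (simp add: axis_def)
  then have "(\<Sum>j\<in>UNIV. (norm (axis i x $ j))\<^sup>2) = (norm x)\<^sup>2"
    by simp
  then show ?thesis by (simp add: norm_vec_def L2_set_def)
qed

lemma bounded_linear_axis: "bounded_linear (axis i :: 'a::real_normed_vector \<Rightarrow> 'a^'n)"
proof (rule bounded_linear_intro[where K=1])
  show "norm (axis i x) \<le> norm x * 1" for x :: 'a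
    by (simp add: norm_axis)
qed (simp_all add: vec_eq_iff axis_def)

lemma tendsto_difference_quotient_at_right:
  fixes F :: "'a::real_normed_vector \<Rightarrow> 'b::real_normed_vector"
  assumes "F differentiable (at p)"
  shows "((\<lambda>r. (F (p + r *\<^sub>R v) - F p) /\<^sub>R r) \<longlongrightarrow> frechet_derivative F (at p) v) (at_right 0)"
proof -
  define D where "D = frechet_derivative F (at p)"
  have hD: "(F has_derivative D) (at p)"
    using assms frechet_derivative_works D_def by blast
  have "((\<lambda>r. p + r *\<^sub>R v) has_derivative (\<lambda>r. r *\<^sub>R v)) (at 0)"
    by (auto intro!: derivative_eq_intros)
  moreover have "(F has_derivative D) (at (p + 0 *\<^sub>R v))"
    using hD by simp
  ultimately have "((\<lambda>r. F (p + r *\<^sub>R v)) has_derivative (\<lambda>r. r *\<^sub>R D v)) (at 0)"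
    using diff_chain_at by (fastforce simp: o_def linear_scale[OF has_derivative_linear[OF hD]])
  then have "((\<lambda>r. (F (p + r *\<^sub>R v) - F p - r *\<^sub>R D v) /\<^sub>R \<bar>r\<bar>) \<longlongrightarrow> 0) (at_right 0)"
    unfolding has_derivative_at_within[of _ _ 0 UNIV] by (simp add: filterlim_at_split)
  then have "((\<lambda>r. (F (p + r *\<^sub>R v) - F p) /\<^sub>R r - D v) \<longlongrightarrow> 0) (at_right 0)"
    by (rule Lim_transform_eventually)
       (auto intro: eventually_mono[OF eventually_at_right_less] simp: algebra_simps)
  then show ?thesis unfolding D_def using Lim_null by blast
qed

lemma norm_sum_power2_le_card:
  fixes f :: "'i \<Rightarrow> 'a::real_normed_vector"
  shows "(norm (\<Sum>i\<in>I. f i))\<^sup>2 \<le> card I * (\<Sum>i\<in>I. (norm (f i))\<^sup>2)"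
proof -
  have "(norm (\<Sum>i\<in>I. f i))\<^sup>2 \<le> (\<Sum>i\<in>I. norm (f i))\<^sup>2"
    by (intro power_mono norm_sum) simp
  also have "\<dots> \<le> card I * (\<Sum>i\<in>I. (norm (f i))\<^sup>2)"
    using sum_squared_le_sum_of_squares[of "\<lambda>i. norm (f i)" I] by (simp add: mult.commute)
  finally show ?thesis .
qed

lemma norm_add_power2_ge:
  fixes a b :: "'a::real_normed_vector"
  shows "(norm a)\<^sup>2 - 2 * norm a * norm b \<le> (norm (a + b))\<^sup>2"
proof (cases "norm b \<le> norm a")
  case True
  have "(norm a)\<^sup>2 - 2 * norm a * norm b \<le> (norm a - norm b)\<^sup>2"
    by (simp add: power2_diff)
  also have "\<dots> \<le> (norm (a + b))\<^sup>2"
    using True by (intro power_mono) (auto simp: norm_diff_ineq)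
  finally show ?thesis .
next
  case False
  then have "(norm a)\<^sup>2 \<le> norm a * norm b"
    by (simp add: power2_eq_square mult_left_mono)
  then show ?thesis
    using zero_le_power2[of "norm (a + b)"] mult_nonneg_nonneg[OF norm_ge_zero norm_ge_zero, of a b]
    by linarith
qed

definition fourth_roots_of_unity :: "complex set" where
  "fourth_roots_of_unity = {1, -1, \<i>, -\<i>}"

lemma sum_fourth_roots_of_unity:
  "(\<Sum>c\<in>fourth_roots_of_unity. f c) = f 1 + f (-1) + f \<i> + f (-\<i>)"
  by (simp add: fourth_roots_of_unity_def complex_eq_iff add.assoc)

lemma card_fourth_roots_of_unity: "card fourth_roots_of_unity = 4"
  by (simp add: fourth_roots_of_unity_def complex_eq_iff)

lemma norm_fourth_root_of_unity: "c \<in> fourth_roots_of_unity \<Longrightarrow> norm c = 1"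
  by (auto simp: fourth_roots_of_unity_def)

lemma holomorphic_second_order_expansion:
  fixes h :: "complex \<Rightarrow> complex"
  assumes "h holomorphic_on ball 0 \<delta>" and "\<delta> > 0"
  obtains h2 where "isCont h2 0" and "\<And>z. h z = h 0 + z * deriv h 0 + z\<^sup>2 * h2 z"
proof -
  have int0: "0 \<in> interior (ball (0::complex) \<delta>)"
    using assms(2) by simp
  define h1 where "h1 z = (if z = 0 then deriv h 0 else (h z - h 0) / (z - 0))" for z
  have "h1 holomorphic_on ball 0 \<delta>"
    unfolding h1_def by (rule pole_lemma[OF assms(1) int0])
  define h2 where "h2 z = (if z = 0 then deriv h1 0 else (h1 z - h1 0) / (z - 0))" for z
  have "h2 holomorphic_on ball 0 \<delta>"
    unfolding h2_def by (rule pole_lemma[OF \<open>h1 holomorphic_on _\<close> int0])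
  then have "isCont h2 0"
    using assms(2) centre_in_ball continuous_on_eq_continuous_at holomorphic_on_imp_continuous_on
      open_ball by blast
  moreover have "h z = h 0 + z * deriv h 0 + z\<^sup>2 * h2 z" for z
    by (cases "z = 0") (simp_all add: h1_def h2_def power2_eq_square field_simps)
  ultimately show thesis by (rule that)
qed

text \<open>A discrete sub-mean-value inequality for \<open>|h|\<^sup>2\<close>: the first-order terms of \<open>h\<close> cancel
  over the fourth roots of unity, so the defect is \<open>o(r\<^sup>2)\<close>.\<close>
lemma sum_fourth_roots_norm_power2_ge:
  fixes h :: "complex \<Rightarrow> complex"
  assumes "h holomorphic_on ball 0 \<delta>" and "\<delta> > 0"
  obtains E where "(E \<longlongrightarrow> 0) (at_right 0)"
    and "\<And>r. 4 * (cmod (h 0))\<^sup>2 - r\<^sup>2 * E r \<le> (\<Sum>c\<in>fourth_roots_of_unity. (cmod (h (c * of_real r)))\<^sup>2)"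
proof -
  obtain h2 where cont: "isCont h2 0" and expand: "\<And>z. h z = h 0 + z * deriv h 0 + z\<^sup>2 * h2 z"
    using holomorphic_second_order_expansion[OF assms] by blast
  define S where "S r = (\<Sum>c\<in>fourth_roots_of_unity. c\<^sup>2 * h2 (c * of_real r))" for r :: real
  define E where "E r = 2 * cmod (h 0) * cmod (S r)" for r
  have "((\<lambda>r::real. h2 (c * of_real r)) \<longlongrightarrow> h2 0) (at_right 0)" for c
    by (rule isCont_tendsto_compose[OF cont]) (auto intro!: tendsto_eq_intros)
  then have "(S \<longlongrightarrow> (\<Sum>c\<in>fourth_roots_of_unity. c\<^sup>2 * h2 0)) (at_right 0)"
    unfolding S_def by (intro tendsto_intros)
  then have "(S \<longlongrightarrow> 0) (at_right 0)"
    by (simp add: sum_fourth_roots_of_unity)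
  then have "(E \<longlongrightarrow> 0) (at_right 0)"
    unfolding E_def using tendsto_mult_right_zero tendsto_norm_zero by blast
  moreover have "4 * (cmod (h 0))\<^sup>2 - r\<^sup>2 * E r \<le> (\<Sum>c\<in>fourth_roots_of_unity. (cmod (h (c * of_real r)))\<^sup>2)"
    for r
  proof -
    have sum_h: "(\<Sum>c\<in>fourth_roots_of_unity. h (c * of_real r)) = 4 * h 0 + of_real (r\<^sup>2) * S r"
      unfolding S_def sum_fourth_roots_of_unity mult_1 mult_minus_left
        expand[of "of_real r"] expand[of "- of_real r"] expand[of "\<i> * of_real r"]
        expand[of "- (\<i> * of_real r)"]
      by (simp add: power2_eq_square algebra_simps)
    have "16 * (cmod (h 0))\<^sup>2 - 4 * (r\<^sup>2 * E r)
        = (cmod (4 * h 0))\<^sup>2 - 2 * cmod (4 * h 0) * cmod (of_real (r\<^sup>2) * S r)"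
      by (simp add: E_def norm_mult norm_power power_mult_distrib algebra_simps)
    also have "\<dots> \<le> (cmod (4 * h 0 + of_real (r\<^sup>2) * S r))\<^sup>2"
      by (rule norm_add_power2_ge)
    also have "\<dots> \<le> 4 * (\<Sum>c\<in>fourth_roots_of_unity. (cmod (h (c * of_real r)))\<^sup>2)"
      using norm_sum_power2_le_card[of "\<lambda>c. h (c * of_real r)" fourth_roots_of_unity]
      by (simp add: sum_h card_fourth_roots_of_unity)
    finally show ?thesis
      by linarith
  qed
  ultimately show thesis by (rule that)
qed

lemma has_field_derivative_coordinate_line:
  fixes F :: "complex^'n \<Rightarrow> complex"
  assumes "F differentiable (at (p + axis a t))" and "wirt_zbar F a (p + axis a t) = 0"
  shows "((\<lambda>s. F (p + axis a s)) has_field_derivative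
           frechet_derivative F (at (p + axis a t)) (axis a 1)) (at t)"
proof -
  define D where "D = frechet_derivative F (at (p + axis a t))"
  have hD: "(F has_derivative D) (at (p + axis a t))"
    using assms(1) frechet_derivative_works D_def by blast
  have "((\<lambda>s. p + axis a s) has_derivative axis a) (at t)"
    using has_derivative_add[OF has_derivative_const[of p]
        bounded_linear_imp_has_derivative[OF bounded_linear_axis]]
    by simp
  from diff_chain_at[OF this hD]
  have chain: "((\<lambda>s. F (p + axis a s)) has_derivative (\<lambda>s. D (axis a s))) (at t)"
    by (simp add: o_def)
  have "D (axis a 1) + \<i> * D (axis a \<i>) = 0"
    using assms(2) by (simp add: wirt_zbar_def D_def)
  then have "\<i> * (D (axis a 1) + \<i> * D (axis a \<i>)) = 0"
    by simp
  then have Di: "D (axis a \<i>) = \<i> * D (axis a 1)"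
    by (simp add: algebra_simps)
  have lin: "D (axis a s) = D (axis a 1) * s" for s
  proof -
    have "axis a s = Re s *\<^sub>R axis a 1 + Im s *\<^sub>R axis a \<i>"
      by (simp add: axis_def vec_eq_iff complex_eq_iff)
    then have "D (axis a s) = Re s *\<^sub>R D (axis a 1) + Im s *\<^sub>R D (axis a \<i>)"
      using has_derivative_linear[OF hD] by (simp add: linear_add linear_scale)
    then show ?thesis
      by (simp add: Di scaleR_conv_of_real complex_eq_iff algebra_simps)
  qed
  then have eq: "(\<lambda>s. D (axis a s)) = (*) (D (axis a 1))"
    by (intro ext lin)
  show ?thesis
    unfolding has_field_derivative_def D_def[symmetric] eq[symmetric] by (rule chain)
qed

lemma holomorphic_on_coordinate_line:
  fixes F :: "complex^'n \<Rightarrow> complex"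
  assumes "\<And>t. t \<in> S \<Longrightarrow> F differentiable (at (p + axis a t))"
    and "\<And>t. t \<in> S \<Longrightarrow> wirt_zbar F a (p + axis a t) = 0"
  shows "(\<lambda>t. F (p + axis a t)) holomorphic_on S"
  unfolding holomorphic_on_def field_differentiable_def
  using has_field_derivative_coordinate_line assms has_field_derivative_at_within by blast


lemma differentiable_wirt_z:
  assumes "smooth_on V F" and "open V" and "q \<in> V"
  shows "wirt_z F b differentiable (at q)"
proof -
  have diff: "iter_dd [axis b v] F differentiable (at q)" for v
    using assms unfolding smooth_on_def by (meson differentiable_on_eq_differentiable_at)
  have "wirt_z F b = (\<lambda>q. (iter_dd [axis b 1] F q - \<i> * iter_dd [axis b \<i>] F q) / 2)"
    by (simp add: wirt_z_def fun_eq_iff)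
  then show ?thesis
    using diff by (auto intro!: differentiable_divide differentiable_diff differentiable_mult)
qed

lemma pcoef_pos:
  assumes "K > 0" and "cmod w < 1"
  shows "0 < pcoef K w"
proof -
  have "(cmod w)\<^sup>2 < 1"
    using assms(2) by (simp add: abs_square_less_1)
  then show ?thesis
    using assms(1) by (simp add: pcoef_def)
qed

lemma isCont_pcoef:
  assumes "K \<noteq> 0" and "cmod w < 1"
  shows "isCont (pcoef K) w"
proof -
  have "(cmod w)\<^sup>2 < 1"
    using assms(2) by (simp add: abs_square_less_1)
  then show ?thesis
    unfolding pcoef_def[abs_def] using assms(1) by (intro continuous_intros) auto
qed

abbreviation dphi :: "(complex^'n \<Rightarrow> real) \<Rightarrow> 'n \<Rightarrow> complex^'n \<Rightarrow> complex" where
  "dphi \<phi> \<alpha> \<equiv> wirt_z (\<lambda>q. complex_of_real (\<phi> q)) \<alpha>"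

definition dphi_term :: "real \<Rightarrow> (complex^'n \<Rightarrow> real) \<Rightarrow> 'n \<Rightarrow> complex^'n \<Rightarrow> real" where
  "dphi_term K \<phi> \<alpha> q = (cmod (dphi \<phi> \<alpha> q))\<^sup>2 / pcoef K (q $ \<alpha>)"

lemma dphi_norm2_eq_sum_dphi_term: "dphi_norm2 K \<phi> q = (\<Sum>\<alpha>\<in>UNIV. dphi_term K \<phi> \<alpha> q)"
  by (simp add: dphi_norm2_def dphi_term_def)

lemma grad_field_eq_0_iff:
  assumes "K > 0" and "cmod (p $ \<alpha>) < 1"
  shows "grad_field K \<phi> p $ \<alpha> = 0 \<longleftrightarrow> dphi \<phi> \<alpha> p = 0"
  using pcoef_pos[OF assms] by (simp add: grad_field_def)

text \<open>For \<open>\<beta> \<noteq> \<alpha>\<close> the potential equation gives \<open>\<partial>\<phi>\<^sub>\<beta>/\<partial>z\<^sup>\<alpha>bar = 0\<close>, so \<open>\<phi>\<^sub>\<beta>\<close> is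
  holomorphic along the \<open>z\<^sup>\<alpha>\<close>-line, and \<open>g\<^sub>\<beta>\<close> is constant there.\<close>
lemma dphi_term_four_point_ge:
  fixes \<phi> :: "complex^'n \<Rightarrow> real"
  assumes "K > 0" and pot: "is_potential K V \<phi>" and "open V" and "V \<subseteq> polydisc"
    and ball: "ball p \<delta> \<subseteq> V" and "\<delta> > 0" and "\<beta> \<noteq> \<alpha>"
  shows "\<exists>E. (E \<longlongrightarrow> 0) (at_right 0) \<and> (\<forall>r. 4 * dphi_term K \<phi> \<beta> p - r\<^sup>2 * E r
           \<le> (\<Sum>c\<in>fourth_roots_of_unity. dphi_term K \<phi> \<beta> (p + axis \<alpha> (c * of_real r))))"
proof -
  have line: "p + axis \<alpha> t \<in> V" if "t \<in> ball 0 \<delta>" for t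
    using that ball by (auto simp: dist_norm norm_axis)
  have "(\<lambda>t. dphi \<phi> \<beta> (p + axis \<alpha> t)) holomorphic_on ball 0 \<delta>"
    using pot line differentiable_wirt_z[of V _ _ \<beta>] \<open>open V\<close> \<open>\<beta> \<noteq> \<alpha>\<close>
    unfolding is_potential_def by (intro holomorphic_on_coordinate_line) auto
  then obtain E where E: "(E \<longlongrightarrow> 0) (at_right 0)"
    and bound: "\<And>r. 4 * (cmod (dphi \<phi> \<beta> (p + axis \<alpha> 0)))\<^sup>2 - r\<^sup>2 * E r
      \<le> (\<Sum>c\<in>fourth_roots_of_unity. (cmod (dphi \<phi> \<beta> (p + axis \<alpha> (c * of_real r))))\<^sup>2)"
    using sum_fourth_roots_norm_power2_ge[OF _ \<open>\<delta> > 0\<close>] by blast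
  define g where "g = pcoef K (p $ \<beta>)"
  have "p \<in> V"
    using ball \<open>\<delta> > 0\<close> by auto
  then have "0 < g"
    using pcoef_pos[OF \<open>K > 0\<close>] \<open>V \<subseteq> polydisc\<close> by (auto simp: g_def polydisc_def)
  have "4 * dphi_term K \<phi> \<beta> p - r\<^sup>2 * (E r / g)
      \<le> (\<Sum>c\<in>fourth_roots_of_unity. dphi_term K \<phi> \<beta> (p + axis \<alpha> (c * of_real r)))" for r
    using divide_right_mono[OF bound[of r], of g] \<open>0 < g\<close> \<open>\<beta> \<noteq> \<alpha>\<close> axis_eq_0_iff[of \<alpha> "0::complex"]
    by (simp add: dphi_term_def g_def[symmetric] axis_def diff_divide_distrib sum_divide_distrib)
  moreover have "((\<lambda>r. E r / g) \<longlongrightarrow> 0) (at_right 0)"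
    using tendsto_divide[OF E tendsto_const[of g]] \<open>0 < g\<close> by simp
  ultimately show ?thesis by blast
qed

lemma sum_fourth_roots_norm_derivative_pos:
  fixes F :: "complex^'n \<Rightarrow> complex"
  assumes "wirt_zbar F \<alpha> p \<noteq> 0"
  shows "0 < (\<Sum>c\<in>fourth_roots_of_unity. (cmod (frechet_derivative F (at p) (axis \<alpha> c)))\<^sup>2)"
proof -
  let ?D = "\<lambda>c. frechet_derivative F (at p) (axis \<alpha> c)"
  have "?D 1 \<noteq> 0 \<or> ?D \<i> \<noteq> 0"
    using assms by (auto simp: wirt_zbar_def)
  then have "0 < (cmod (?D 1))\<^sup>2 + (cmod (?D \<i>))\<^sup>2"
    by (auto intro: add_pos_nonneg add_nonneg_pos)
  moreover have "0 \<le> (cmod (?D (-1)))\<^sup>2" and "0 \<le> (cmod (?D (-\<i>)))\<^sup>2"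
    by simp_all
  ultimately show ?thesis
    unfolding sum_fourth_roots_of_unity by linarith
qed

text \<open>The growth is quadratic because \<open>\<partial>\<phi>\<^sub>\<alpha>/\<partial>z\<^sup>\<alpha>bar = g\<^sub>\<alpha> > 0\<close> forces a nonzero
  derivative of \<open>\<phi>\<^sub>\<alpha>\<close> along the \<open>z\<^sup>\<alpha>\<close>-line.\<close>
lemma dphi_term_four_point_quadratic_growth:
  fixes \<phi> :: "complex^'n \<Rightarrow> real"
  assumes "K > 0" and pot: "is_potential K V \<phi>" and "open V" and "V \<subseteq> polydisc"
    and "p \<in> V" and zero: "dphi \<phi> \<alpha> p = 0"
  shows "\<exists>M>0. ((\<lambda>r. (\<Sum>c\<in>fourth_roots_of_unity. dphi_term K \<phi> \<alpha> (p + axis \<alpha> (c * of_real r))) / r\<^sup>2)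
           \<longlongrightarrow> M) (at_right 0)"
proof -
  let ?D = "frechet_derivative (dphi \<phi> \<alpha>) (at p)"
  define g where "g = pcoef K (p $ \<alpha>)"
  have pa: "cmod (p $ \<alpha>) < 1"
    using \<open>p \<in> V\<close> \<open>V \<subseteq> polydisc\<close> by (auto simp: polydisc_def)
  then have "0 < g"
    using pcoef_pos[OF \<open>K > 0\<close>] by (simp add: g_def)
  have diff: "dphi \<phi> \<alpha> differentiable (at p)"
    using pot \<open>open V\<close> \<open>p \<in> V\<close> differentiable_wirt_z unfolding is_potential_def by blast
  have "wirt_zbar (dphi \<phi> \<alpha>) \<alpha> p \<noteq> 0"
    using pot \<open>p \<in> V\<close> \<open>0 < g\<close> unfolding is_potential_def g_def by auto
  then have M: "0 < (\<Sum>c\<in>fourth_roots_of_unity. (cmod (?D (axis \<alpha> c)))\<^sup>2) / g"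
    using sum_fourth_roots_norm_derivative_pos \<open>0 < g\<close> by (intro divide_pos_pos)
  have "((\<lambda>r. dphi_term K \<phi> \<alpha> (p + axis \<alpha> (c * of_real r)) / r\<^sup>2)
          \<longlongrightarrow> (cmod (?D (axis \<alpha> c)))\<^sup>2 / g) (at_right 0)" for c
  proof -
    have "((\<lambda>r. p $ \<alpha> + c * of_real r) \<longlongrightarrow> p $ \<alpha>) (at_right 0)"
      by (auto intro!: tendsto_eq_intros)
    then have "((\<lambda>r. pcoef K (p $ \<alpha> + c * of_real r)) \<longlongrightarrow> g) (at_right 0)"
      unfolding g_def using pa \<open>K > 0\<close> by (intro isCont_tendsto_compose[OF isCont_pcoef]) auto
    moreover have "p + axis \<alpha> (c * of_real r) = p + r *\<^sub>R axis \<alpha> c" for r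
      by (simp add: axis_def vec_eq_iff) (simp add: scaleR_conv_of_real mult.commute)
    then have "((\<lambda>r. (dphi \<phi> \<alpha> (p + axis \<alpha> (c * of_real r)) - dphi \<phi> \<alpha> p) /\<^sub>R r)
        \<longlongrightarrow> ?D (axis \<alpha> c)) (at_right 0)"
      using tendsto_difference_quotient_at_right[OF diff, of "axis \<alpha> c"] by simp
    ultimately have "((\<lambda>r. (cmod ((dphi \<phi> \<alpha> (p + axis \<alpha> (c * of_real r)) - dphi \<phi> \<alpha> p) /\<^sub>R r))\<^sup>2
            / pcoef K (p $ \<alpha> + c * of_real r)) \<longlongrightarrow> (cmod (?D (axis \<alpha> c)))\<^sup>2 / g) (at_right 0)"
      using \<open>0 < g\<close> by (intro tendsto_intros) auto
    then show ?thesis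
      by (rule Lim_transform_eventually, intro eventually_mono[OF eventually_at_right_less])
        (simp add: dphi_term_def zero power_mult_distrib power_inverse divide_inverse
          inverse_mult_distrib mult_ac)
  qed
  then have "((\<lambda>r. (\<Sum>c\<in>fourth_roots_of_unity. dphi_term K \<phi> \<alpha> (p + axis \<alpha> (c * of_real r))) / r\<^sup>2)
      \<longlongrightarrow> (\<Sum>c\<in>fourth_roots_of_unity. (cmod (?D (axis \<alpha> c)))\<^sup>2) / g) (at_right 0)"
    by (simp add: sum_divide_distrib tendsto_sum)
  with M show ?thesis by blast
qed

lemma eventually_sum_pos_at_right:
  fixes T E :: "'i \<Rightarrow> real \<Rightarrow> real"
  assumes "finite I" and "a \<in> I"
    and lim: "((\<lambda>r. T a r / r\<^sup>2) \<longlongrightarrow> M) (at_right 0)" and "M > 0"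
    and E: "\<And>b. b \<in> I - {a} \<Longrightarrow> (E b \<longlongrightarrow> 0) (at_right 0)"
    and T: "\<And>b r. b \<in> I - {a} \<Longrightarrow> - (r\<^sup>2 * E b r) \<le> T b r"
  shows "\<forall>\<^sub>F r in at_right 0. 0 < (\<Sum>b\<in>I. T b r)"
proof -
  have "((\<lambda>r. T a r / r\<^sup>2 - (\<Sum>b\<in>I - {a}. E b r)) \<longlongrightarrow> M - 0) (at_right 0)"
    using E by (intro tendsto_diff lim tendsto_null_sum) auto
  then have "\<forall>\<^sub>F r in at_right 0. 0 < T a r / r\<^sup>2 - (\<Sum>b\<in>I - {a}. E b r)"
    using \<open>M > 0\<close> by (intro order_tendstoD(1)) auto
  then show ?thesis
    using eventually_at_right_less[of "0::real"]
  proof eventually_elim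
    case (elim r)
    then have "0 < r\<^sup>2 * (T a r / r\<^sup>2 - (\<Sum>b\<in>I - {a}. E b r))"
      by simp
    also have "\<dots> = T a r + (\<Sum>b\<in>I - {a}. - (r\<^sup>2 * E b r))"
      using elim by (simp add: sum_distrib_left sum_negf field_simps)
    also have "\<dots> \<le> T a r + (\<Sum>b\<in>I - {a}. T b r)"
      using T by (intro add_left_mono sum_mono)
    also have "\<dots> = (\<Sum>b\<in>I. T b r)"
      using assms(1,2) by (simp add: sum.remove)
    finally show ?case .
  qed
qed

lemma four_point_sum_dphi_norm2_gt:
  fixes \<phi> :: "complex^'n \<Rightarrow> real"
  assumes "K > 0" and "is_potential K V \<phi>" and "open V" and "V \<subseteq> polydisc"
    and "p \<in> V" and zero: "dphi \<phi> \<alpha> p = 0"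
  shows "\<forall>\<^sub>F r in at_right 0.
           4 * dphi_norm2 K \<phi> p < (\<Sum>c\<in>fourth_roots_of_unity. dphi_norm2 K \<phi> (p + axis \<alpha> (c * of_real r)))"
proof -
  obtain \<delta> where "\<delta> > 0" and ball: "ball p \<delta> \<subseteq> V"
    using \<open>open V\<close> \<open>p \<in> V\<close> open_contains_ball by blast
  define T where "T \<beta> r = (\<Sum>c\<in>fourth_roots_of_unity. dphi_term K \<phi> \<beta> (p + axis \<alpha> (c * of_real r)))
    - 4 * dphi_term K \<phi> \<beta> p" for \<beta> r
  obtain M where "M > 0" and M: "((\<lambda>r. T \<alpha> r / r\<^sup>2) \<longlongrightarrow> M) (at_right 0)"
    using dphi_term_four_point_quadratic_growth[OF assms] by (auto simp: T_def dphi_term_def zero)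
  have "\<forall>\<beta>. \<exists>E. \<beta> \<noteq> \<alpha> \<longrightarrow> (E \<longlongrightarrow> 0) (at_right 0) \<and> (\<forall>r. - (r\<^sup>2 * E r) \<le> T \<beta> r)"
  proof
    fix \<beta>
    show "\<exists>E. \<beta> \<noteq> \<alpha> \<longrightarrow> (E \<longlongrightarrow> 0) (at_right 0) \<and> (\<forall>r. - (r\<^sup>2 * E r) \<le> T \<beta> r)"
    proof (cases "\<beta> = \<alpha>")
      case False
      then obtain E where "(E \<longlongrightarrow> 0) (at_right 0)"
        and bound: "\<And>r. 4 * dphi_term K \<phi> \<beta> p - r\<^sup>2 * E r
          \<le> (\<Sum>c\<in>fourth_roots_of_unity. dphi_term K \<phi> \<beta> (p + axis \<alpha> (c * of_real r)))"
        using dphi_term_four_point_ge[OF assms(1-4) ball \<open>\<delta> > 0\<close>] by blast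
      moreover have "- (r\<^sup>2 * E r) \<le> T \<beta> r" for r
        using bound[of r] unfolding T_def by linarith
      ultimately show ?thesis
        by blast
    qed simp
  qed
  from choice[OF this] obtain E where
    "\<forall>\<beta>. \<beta> \<noteq> \<alpha> \<longrightarrow> (E \<beta> \<longlongrightarrow> 0) (at_right 0) \<and> (\<forall>r. - (r\<^sup>2 * E \<beta> r) \<le> T \<beta> r)"
    by blast
  then have "\<forall>\<^sub>F r in at_right 0. 0 < (\<Sum>\<beta>\<in>UNIV. T \<beta> r)"
    using \<open>M > 0\<close> M by (intro eventually_sum_pos_at_right[where a = \<alpha> and E = E]) auto
  then show ?thesis
    by (simp add: T_def dphi_norm2_eq_sum_dphi_term sum_subtractf sum_distrib_left
        sum.swap[of _ UNIV] card_fourth_roots_of_unity)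
qed

lemma dphi_ne_0_at_local_max_dphi_norm2:
  fixes \<phi> :: "complex^'n \<Rightarrow> real"
  assumes "K > 0" and "is_potential K V \<phi>" and "open V" and "V \<subseteq> polydisc"
    and "p \<in> V" and max: "\<And>q. q \<in> V \<Longrightarrow> dphi_norm2 K \<phi> q \<le> dphi_norm2 K \<phi> p"
  shows "dphi \<phi> \<alpha> p \<noteq> 0"
proof
  assume zero: "dphi \<phi> \<alpha> p = 0"
  obtain \<delta> where "\<delta> > 0" and ball: "ball p \<delta> \<subseteq> V"
    using \<open>open V\<close> \<open>p \<in> V\<close> open_contains_ball by blast
  have "\<forall>\<^sub>F r in at_right 0. r < \<delta>"
    using eventually_at_right_real[OF \<open>\<delta> > 0\<close>] by (rule eventually_mono) auto
  then have "\<forall>\<^sub>F r in at_right 0.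
      (\<Sum>c\<in>fourth_roots_of_unity. dphi_norm2 K \<phi> (p + axis \<alpha> (c * of_real r))) \<le> 4 * dphi_norm2 K \<phi> p"
    using eventually_at_right_less[of 0]
  proof eventually_elim
    case (elim r)
    then have "p + axis \<alpha> (c * of_real r) \<in> V" if "c \<in> fourth_roots_of_unity" for c
      using that ball by (auto simp: dist_norm norm_axis norm_mult norm_fourth_root_of_unity)
    then have "(\<Sum>c\<in>fourth_roots_of_unity. dphi_norm2 K \<phi> (p + axis \<alpha> (c * of_real r)))
        \<le> (\<Sum>c\<in>fourth_roots_of_unity. dphi_norm2 K \<phi> p)"
      using max by (intro sum_mono) auto
    then show ?case
      by (simp add: card_fourth_roots_of_unity)
  qed
  moreover note four_point_sum_dphi_norm2_gt[OF assms(1-5) zero]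
  ultimately have "\<forall>\<^sub>F r in at_right (0::real). False"
    by eventually_elim simp
  then show False
    by simp
qed

theorem lemma3p3:
  fixes K K' C :: real
    and u :: "complex \<Rightarrow> complex^'n"
    and \<phi> :: "complex^'n \<Rightarrow> real"
    and V :: "(complex^'n) set"
  assumes "K > 0" and "K' > 0" and "C > 0"
    and "holo_isometric_embedding K K' u"
    and "totally_geodesic_curve u"
    and "open V" and "V \<subseteq> polydisc" and "V \<inter> u ` ball 0 1 \<noteq> {}"
    and "is_potential K V \<phi>"
    and "\<forall>p\<in>V. dphi_norm2 K \<phi> p \<le> C"
    and "\<forall>\<zeta>\<in>ball 0 1. u \<zeta> \<in> V \<longrightarrow>
           (\<exists>c::complex. grad_field K \<phi> (u \<zeta>) = (\<chi> \<alpha>. c * deriv (\<lambda>t. u t $ \<alpha>) \<zeta>))"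
    and "\<forall>\<zeta>\<in>ball 0 1. u \<zeta> \<in> V \<longrightarrow> dphi_norm2 K \<phi> (u \<zeta>) = C"
  shows "\<forall>\<alpha>. \<not> (\<exists>c. \<forall>\<zeta>\<in>ball 0 1. u \<zeta> $ \<alpha> = c)"
proof (intro allI notI)
  fix \<alpha>
  assume "\<exists>c. \<forall>\<zeta>\<in>ball 0 1. u \<zeta> $ \<alpha> = c"
  then obtain c where const: "\<And>\<zeta>. \<zeta> \<in> ball 0 1 \<Longrightarrow> u \<zeta> $ \<alpha> = c"
    by blast
  obtain \<zeta> where \<zeta>: "\<zeta> \<in> ball 0 1" and "u \<zeta> \<in> V"
    using assms(8) by blast
  have "((\<lambda>t. u t $ \<alpha>) has_field_derivative 0) (at \<zeta>)"
    by (rule has_field_derivative_transform_within_open[of "\<lambda>t. c" 0 \<zeta> "ball 0 1"])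
      (use \<zeta> const in auto)
  then have "grad_field K \<phi> (u \<zeta>) $ \<alpha> = 0"
    using assms(11) \<zeta> \<open>u \<zeta> \<in> V\<close> DERIV_imp_deriv by fastforce
  moreover have "cmod (u \<zeta> $ \<alpha>) < 1"
    using \<open>u \<zeta> \<in> V\<close> assms(7) by (auto simp: polydisc_def)
  ultimately have "dphi \<phi> \<alpha> (u \<zeta>) = 0"
    using grad_field_eq_0_iff[OF \<open>K > 0\<close>] by blast
  moreover have "dphi \<phi> \<alpha> (u \<zeta>) \<noteq> 0"
    using \<zeta> \<open>u \<zeta> \<in> V\<close> assms(1,6,7,9,10,12)
    by (intro dphi_ne_0_at_local_max_dphi_norm2[where V = V]) auto
  ultimately show False
    by contradiction
qed

end
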